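(* Let $S$ be any connected shape whose nodes occupy $l$ rows and $w$ columns of the grid. Then, in the adjacency graph model with cycle-breaking growth processes and neighbor handover allowed, there is a growth process that grows $S$ from a single node in $O(\log l+\log w)$ time steps.
   Context: Shapes. Grid points are integer pairs $(x,y)$; two grid points are adjacent if they are at orthogonal (Manhattan) distance $1$. A shape $S=(V,E)$ is a finite connected graph whose nodes occupy distinct grid points and whose edges join only pairs of nodes occupying adjacent points; shapes are considered up to translation. The adjacency closure $AC(S)$ is obtained from $S$ by adding an edge between every pair of adjacent nodes that are not yet joined. Growth operations. One node, the anchor $u_0$, is stationary; other nodes move relative to it. A growth operation on a node $u$ toward an adjacent grid point $p$ either (i) if $u$ has no edge to $p$, creates a new node $u'$ at $p$ with edge $uu'$; or (ii) if $p$ is occupied by a node $v$ with $uv\in E$, creates a new node $u'$ at $p$, replaces edge $uv$ by edges $uu',u'v$, and translates by one unit, along the axis of $uv$, the part of a spanning tree rooted at $u_0$ hanging from whichever of $u,v$ is farther from $u_0$, away from the other endpoint. With neighbor handover, in addition any neighbor $w$ of $u$ lying in a direction perpendicular to $uu'$ may be handed over to $u'$ (become joined to $u'$ instead of $u$) by a unit translation parallel to $uu'$ of the subtree of whichever of $u,w$ is farther from $u_0$. In one time step a set of operations is applied concurrently, each node receiving at most one operation and all operations having the same cardinal direction; the displacement of each node is the sum of the unit vectors contributed by the operations on its path to $u_0$ in a spanning tree rooted at $u_0$. The set is collision-free if no two nodes collide during these motions or end at the same point, and for every cycle and every two of its nodes the displacements accumulated along the two paths of the cycle between them are equal. Growth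 processes. A cycle-breaking growth process in the adjacency graph model starts from $S_1^b=S_0$; in each time step $t$ it first deletes a (possibly empty) subset of edges of $S_t^b$ whose removal keeps the shape connected, then applies a collision-free set of growth operations, obtaining $S_t^e$, and sets $S_{t+1}^b=AC(S_t^e)$. It grows $S$ in $t_f$ steps if the shape after step $t_f$ is $S$. *)

theory Defs
  imports Complex_Main
begin

type_synonym pt = "int \<times> int"

(* a shape: (set of occupied grid points = nodes, set of edges as 2-element point sets) *)
type_synonym shape = "pt set \<times> pt set set"

definition padd :: "pt \<Rightarrow> pt \<Rightarrow> pt" where
  "padd p q = (fst p + fst q, snd p + snd q)"

definition psub :: "pt \<Rightarrow> pt \<Rightarrow> pt" where
  "psub p q = (fst p - fst q, snd p - snd q)"

definition adj :: "pt \<Rightarrow> pt \<Rightarrow> bool" where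
  "adj p q \<longleftrightarrow> \<bar>fst p - fst q\<bar> + \<bar>snd p - snd q\<bar> = 1"

definition grid_edges :: "pt set \<Rightarrow> pt set set" where
  "grid_edges V = {{p, q} | p q. p \<in> V \<and> q \<in> V \<and> adj p q}"

definition graph_connected :: "pt set \<Rightarrow> pt set set \<Rightarrow> bool" where
  "graph_connected V E \<longleftrightarrow>
     (\<forall>p\<in>V. \<forall>q\<in>V. (p, q) \<in> {(a, b). {a, b} \<in> E}\<^sup>*)"

definition is_shape :: "shape \<Rightarrow> bool" where
  "is_shape S \<longleftrightarrow> finite (fst S) \<and> fst S \<noteq> {} \<and> snd S \<subseteq> grid_edges (fst S)
                 \<and> graph_connected (fst S) (snd S)"

definition AC :: "shape \<Rightarrow> shape" where
  "AC S = (fst S, snd S \<union> grid_edges (fst S))"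

definition translate :: "pt \<Rightarrow> shape \<Rightarrow> shape" where
  "translate c S = (padd c ` fst S, (\<lambda>e. padd c ` e) ` snd S)"

definition same_shape :: "shape \<Rightarrow> shape \<Rightarrow> bool" where
  "same_shape S T \<longleftrightarrow> (\<exists>c. T = translate c S)"

definition single_node :: shape where
  "single_node = ({(0, 0)}, {})"

definition num_rows :: "shape \<Rightarrow> nat" where
  "num_rows S = card (snd ` fst S)"

definition num_cols :: "shape \<Rightarrow> nat" where
  "num_cols S = card (fst ` fst S)"

definition unit_dirs :: "pt set" where
  "unit_dirs = {(1, 0), (-1, 0), (0, 1), (0, -1)}"

definition perp :: "pt \<Rightarrow> pt \<Rightarrow> bool" where
  "perp a b \<longleftrightarrow> fst a * fst b + snd a * snd b = 0"

(* Nodes after the step: Inl a = pre-existing node at a; Inr u = node u' created by the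
   operation on u.  Ops = nodes receiving an operation (all in direction d);
   H u = neighbours of u handed over to u'. *)
definition valid_ops :: "pt set \<Rightarrow> pt set set \<Rightarrow> pt \<Rightarrow> pt set \<Rightarrow> (pt \<Rightarrow> pt set) \<Rightarrow> bool" where
  "valid_ops V E d Ops H \<longleftrightarrow> d \<in> unit_dirs \<and> Ops \<subseteq> V \<and>
     (\<forall>u\<in>Ops. H u \<subseteq> {w. {u, w} \<in> E \<and> perp (psub w u) d})"

definition step_nodes :: "pt set \<Rightarrow> pt set \<Rightarrow> (pt + pt) set" where
  "step_nodes V Ops = Inl ` V \<union> Inr ` Ops"

(* edges of the graph after the operations, each with the required relative offset
   (final position of 2nd node minus final position of 1st node) *)
definition step_edges ::
  "pt set set \<Rightarrow> pt \<Rightarrow> pt set \<Rightarrow> (pt \<Rightarrow> pt set) \<Rightarrow> ((pt + pt) \<times> (pt + pt) \<times> pt) set" where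
  "step_edges E d Ops H =
     {(Inl a, Inl b, psub b a) | a b. {a, b} \<in> E
         \<and> \<not> (a \<in> Ops \<and> b = padd a d) \<and> \<not> (b \<in> Ops \<and> a = padd b d)
         \<and> \<not> (a \<in> Ops \<and> b \<in> H a) \<and> \<not> (b \<in> Ops \<and> a \<in> H b)}
   \<union> {(Inl u, Inr u, d) | u. u \<in> Ops}
   \<union> {(Inr u, Inl (padd u d), d) | u. u \<in> Ops \<and> {u, padd u d} \<in> E}
   \<union> {(Inr u, Inl w, psub w u) | u w. u \<in> Ops \<and> w \<in> H u}"

definition start_pos :: "pt + pt \<Rightarrow> pt" where
  "start_pos x = case_sum id id x"

definition traj :: "(pt + pt \<Rightarrow> pt) \<Rightarrow> pt + pt \<Rightarrow> real \<Rightarrow> real \<times> real" where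
  "traj p x s =
     (real_of_int (fst (start_pos x)) + s * real_of_int (fst (p x) - fst (start_pos x)),
      real_of_int (snd (start_pos x)) + s * real_of_int (snd (p x) - snd (start_pos x)))"

(* p: final positions.  Consistency of p with all edge offsets is the cycle condition;
   the trajectory condition excludes collisions during the motion and at the end. *)
definition collision_free ::
  "pt set \<Rightarrow> pt set set \<Rightarrow> pt \<Rightarrow> pt set \<Rightarrow> (pt \<Rightarrow> pt set) \<Rightarrow> (pt + pt \<Rightarrow> pt) \<Rightarrow> bool" where
  "collision_free V E d Ops H p \<longleftrightarrow>
     (\<forall>(x, y, off) \<in> step_edges E d Ops H. psub (p y) (p x) = off) \<and>
     (\<forall>x\<in>step_nodes V Ops. \<forall>y\<in>step_nodes V Ops. x \<noteq> y \<longrightarrow>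
        (\<forall>s::real. 0 < s \<and> s \<le> 1 \<longrightarrow> traj p x s \<noteq> traj p y s))"

definition growth_step :: "shape \<Rightarrow> shape \<Rightarrow> bool" where
  "growth_step S S' \<longleftrightarrow>
     (\<exists>d Ops H p. valid_ops (fst S) (snd S) d Ops H \<and> collision_free (fst S) (snd S) d Ops H p \<and>
        S' = (p ` step_nodes (fst S) Ops,
              {{p x, p y} | x y off. (x, y, off) \<in> step_edges (snd S) d Ops H}))"

definition cb_step :: "shape \<Rightarrow> shape \<Rightarrow> bool" where
  "cb_step Sb Se \<longleftrightarrow>
     (\<exists>E'. E' \<subseteq> snd Sb \<and> graph_connected (fst Sb) E' \<and> growth_step (fst Sb, E') Se)"

(* grows S from S0 in tf steps; the shape after step tf is S_tf^e *)
definition grows_in :: "shape \<Rightarrow> shape \<Rightarrow> nat \<Rightarrow> bool" where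
  "grows_in S0 S tf \<longleftrightarrow> 1 \<le> tf \<and>
     (\<exists>Sb Se :: nat \<Rightarrow> shape. Sb 1 = S0 \<and>
        (\<forall>t\<in>{1..tf}. cb_step (Sb t) (Se t) \<and> Sb (Suc t) = AC (Se t)) \<and>
        same_shape (Se tf) S)"

end

theory Submission
  imports Defs
begin

text \<open>A connected node set inside a \<open>2^m \<times> 2^n\<close> box is grown from a single node in \<open>m + n\<close>
  steps. Halving all x-coordinates (\<open>x \<mapsto> x div 2\<close>) keeps a node set connected and halves its
  width, and one growth step undoes the halving: a node standing for two points splits, growing a
  new node to its right and handing over those vertical neighbours that stand for an odd point
  only; afterwards every node sits at twice or twice plus one its old x-coordinate, so nodes only
  move right and keep their order within each row, which excludes collisions. The model is
  symmetric under reflection in the diagonal, which turns halving of y-coordinates into halving of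
  x-coordinates. After a translation, a connected shape with \<open>l\<close> rows and \<open>w\<close> columns lies in such
  a box with \<open>m \<le> log w + 1\<close> and \<open>n \<le> log l + 1\<close>; one more step, which deletes the surplus
  edges, yields the shape itself.\<close>

lemma adj_commute: "adj p q \<longleftrightarrow> adj q p"
  unfolding adj_def by auto

lemma adj_irrefl [simp]: "\<not> adj p p"
  unfolding adj_def by auto

lemma doubleton_in_grid_edges: "{a, b} \<in> grid_edges V \<longleftrightarrow> a \<in> V \<and> b \<in> V \<and> adj a b"
  unfolding grid_edges_def by (auto simp: doubleton_eq_iff adj_commute; metis prod.collapse)

lemma grid_edgesE:
  assumes "e \<in> grid_edges V"
  obtains a b where "e = {a, b}" "a \<in> V" "b \<in> V" "adj a b"
  using assms unfolding grid_edges_def by auto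

lemma graph_connected_image:
  assumes "graph_connected V E"
    and "\<And>a b. {a, b} \<in> E \<Longrightarrow> f a = f b \<or> {f a, f b} \<in> E'"
  shows "graph_connected (f ` V) E'"
proof -
  have "(f a, f b) \<in> {(x, y). {x, y} \<in> E'}\<^sup>*" if "(a, b) \<in> {(x, y). {x, y} \<in> E}\<^sup>*" for a b
    using that
  proof (induction rule: rtrancl_induct)
    case (step b c)
    then show ?case
      using assms(2)[of b c] by (auto intro: rtrancl_into_rtrancl)
  qed simp
  then show ?thesis
    using assms(1) unfolding graph_connected_def by blast
qed

lemma graph_connected_mono: "graph_connected V E \<Longrightarrow> E \<subseteq> E' \<Longrightarrow> graph_connected V E'"
  using graph_connected_image[of V E id E'] by auto

abbreviation grid_connected :: "pt set \<Rightarrow> bool" where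
  "grid_connected V \<equiv> graph_connected V (grid_edges V)"

section \<open>Growth processes\<close>

lemma growth_step_idle:
  assumes "E \<subseteq> grid_edges V"
  shows "growth_step (V, E) (V, E)"
proof -
  have edges: "step_edges E (1, 0) {} (\<lambda>_. {}) = {(Inl a, Inl b, psub b a) | a b. {a, b} \<in> E}"
    unfolding step_edges_def by auto
  have "collision_free V E (1, 0) {} (\<lambda>_. {}) start_pos"
    unfolding collision_free_def edges
    by (auto simp: step_nodes_def start_pos_def traj_def prod_eq_iff)
  moreover have "start_pos ` step_nodes V {} = V"
    by (force simp: step_nodes_def start_pos_def)
  moreover have "{{start_pos x, start_pos y} | x y off.
      (x, y, off) \<in> step_edges E (1, 0) {} (\<lambda>_. {})} = E" (is "?E' = E")
  proof
    show "?E' \<subseteq> E"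
      unfolding edges by (auto simp: start_pos_def)
    show "E \<subseteq> ?E'"
    proof
      fix e assume "e \<in> E"
      with assms obtain a b where "e = {a, b}" by (blast elim: grid_edgesE)
      with \<open>e \<in> E\<close> have "(Inl a, Inl b, psub b a) \<in> step_edges E (1, 0) {} (\<lambda>_. {})"
        unfolding edges by blast
      moreover have "e = {start_pos (Inl a), start_pos (Inl b)}"
        using \<open>e = {a, b}\<close> by (simp add: start_pos_def)
      ultimately show "e \<in> ?E'" by blast
    qed
  qed
  moreover have "valid_ops V E (1, 0) {} (\<lambda>_. {})"
    by (simp add: valid_ops_def unit_dirs_def)
  ultimately show ?thesis
    unfolding growth_step_def fst_conv snd_conv
    by (intro exI[of _ "(1, 0)"] exI[of _ "{}"] exI[of _ "\<lambda>_. {}"] exI[of _ start_pos]) simp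
qed

text \<open>Steps are numbered from 1, so the shape \<open>B\<close> reached after \<open>k\<close> steps is the one step
  \<open>k + 1\<close> starts from.\<close>

definition process_prefix :: "nat \<Rightarrow> shape \<Rightarrow> bool" where
  "process_prefix k B \<longleftrightarrow> (\<exists>Sb Se :: nat \<Rightarrow> shape. Sb 1 = single_node \<and>
     (\<forall>t\<in>{1..k}. cb_step (Sb t) (Se t) \<and> Sb (Suc t) = AC (Se t)) \<and> Sb (Suc k) = B)"

lemma process_prefix_0: "process_prefix 0 single_node"
  unfolding process_prefix_def by auto

lemma process_prefix_extend:
  assumes "process_prefix k B" and "cb_step B Y"
  obtains Sb Se :: "nat \<Rightarrow> shape" where "Sb 1 = single_node"
    "\<forall>t\<in>{1..Suc k}. cb_step (Sb t) (Se t) \<and> Sb (Suc t) = AC (Se t)" "Se (Suc k) = Y"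
proof -
  obtain Sb Se where Sb1: "Sb 1 = single_node" and B: "Sb (Suc k) = B"
    and steps: "\<forall>t\<in>{1..k}. cb_step (Sb t) (Se t) \<and> Sb (Suc t) = AC (Se t)"
    using assms(1) unfolding process_prefix_def by blast
  let ?Sb = "Sb(Suc (Suc k) := AC Y)" and ?Se = "Se(Suc k := Y)"
  have "\<forall>t\<in>{1..Suc k}. cb_step (?Sb t) (?Se t) \<and> ?Sb (Suc t) = AC (?Se t)"
    using steps B assms(2) by (auto simp: le_Suc_eq)
  then show ?thesis
    using Sb1 by (intro that[of ?Sb ?Se]) auto
qed

lemma process_prefix_Suc:
  assumes "process_prefix k B" and "cb_step B Y"
  shows "process_prefix (Suc k) (AC Y)"
proof -
  obtain Sb Se :: "nat \<Rightarrow> shape" where "Sb 1 = single_node"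
    "\<forall>t\<in>{1..Suc k}. cb_step (Sb t) (Se t) \<and> Sb (Suc t) = AC (Se t)" "Se (Suc k) = Y"
    by (rule process_prefix_extend[OF assms])
  moreover from this have "Sb (Suc (Suc k)) = AC Y"
    by auto
  ultimately show ?thesis
    unfolding process_prefix_def by blast
qed

lemma grows_in_if_process_prefix:
  assumes "process_prefix k B" and "cb_step B S'" and "same_shape S' S"
  shows "grows_in single_node S (Suc k)"
proof -
  obtain Sb Se :: "nat \<Rightarrow> shape" where "Sb 1 = single_node"
    "\<forall>t\<in>{1..Suc k}. cb_step (Sb t) (Se t) \<and> Sb (Suc t) = AC (Se t)" "Se (Suc k) = S'"
    by (rule process_prefix_extend[OF assms(1,2)])
  then show ?thesis
    using assms(3) unfolding grows_in_def by auto
qed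

definition reaches :: "nat \<Rightarrow> pt set \<Rightarrow> bool" where
  "reaches k V \<longleftrightarrow> (\<exists>E. grid_edges V \<subseteq> E \<and> process_prefix k (V, E))"

lemma grid_edges_singleton: "grid_edges {q} = {}"
  unfolding grid_edges_def by auto

lemma reaches_0: "reaches 0 {(0, 0)}"
  using process_prefix_0 unfolding reaches_def single_node_def by (auto simp: grid_edges_singleton)

lemma reaches_Suc:
  assumes "reaches k V" and "\<And>E. grid_edges V \<subseteq> E \<Longrightarrow> \<exists>Y. cb_step (V, E) Y \<and> fst Y = W"
  shows "reaches (Suc k) W"
proof -
  obtain E where "grid_edges V \<subseteq> E" "process_prefix k (V, E)"
    using assms(1) unfolding reaches_def by blast
  moreover from this obtain Y where "cb_step (V, E) Y" "fst Y = W"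
    using assms(2) by blast
  moreover from \<open>fst Y = W\<close> have "AC Y = (W, snd Y \<union> grid_edges W)"
    unfolding AC_def by simp
  ultimately show ?thesis
    unfolding reaches_def by (metis Un_upper2 process_prefix_Suc)
qed

section \<open>Reflection in the diagonal\<close>

definition mirror :: "pt \<Rightarrow> pt" where
  "mirror p = (snd p, fst p)"

lemma mirror_mirror [simp]: "mirror (mirror p) = p"
  by (simp add: mirror_def)

lemma mirror_eq_iff [simp]: "mirror p = mirror q \<longleftrightarrow> p = q"
  by (metis mirror_mirror)

lemma inj_mirror: "inj mirror"
  by (rule injI) simp

lemma in_mirror_image_iff [simp]: "p \<in> mirror ` A \<longleftrightarrow> mirror p \<in> A"
  by (metis image_eqI imageE mirror_mirror)

lemma image_mirror_mirror [simp]: "mirror ` mirror ` A = A"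
  by (simp add: image_image)

lemma padd_mirror [simp]: "padd (mirror p) (mirror q) = mirror (padd p q)"
  by (simp add: mirror_def padd_def)

lemma psub_mirror [simp]: "psub (mirror p) (mirror q) = mirror (psub p q)"
  by (simp add: mirror_def psub_def)

lemma adj_mirror [simp]: "adj (mirror p) (mirror q) \<longleftrightarrow> adj p q"
  by (auto simp: mirror_def adj_def)

lemma perp_mirror [simp]: "perp (mirror p) (mirror q) \<longleftrightarrow> perp p q"
  by (simp add: mirror_def perp_def add.commute)

lemma mirror_in_unit_dirs_iff [simp]: "mirror d \<in> unit_dirs \<longleftrightarrow> d \<in> unit_dirs"
  by (cases d) (auto simp: mirror_def unit_dirs_def)

abbreviation mirror_edges :: "pt set set \<Rightarrow> pt set set" where
  "mirror_edges E \<equiv> image mirror ` E"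

lemma doubleton_in_mirror_edges_iff [simp]: "{mirror a, mirror b} \<in> mirror_edges E \<longleftrightarrow> {a, b} \<in> E"
proof -
  have "inj (image mirror)"
    by (simp add: inj_def inj_image_eq_iff inj_mirror)
  then show ?thesis
    using inj_image_mem_iff[of "image mirror" "{a, b}" E] by simp
qed

lemma grid_edges_mirror: "grid_edges (mirror ` V) = mirror_edges (grid_edges V)"
proof (intro equalityI subsetI)
  fix e assume "e \<in> grid_edges (mirror ` V)"
  then obtain a b where "e = {a, b}" "a \<in> mirror ` V" "b \<in> mirror ` V" "adj a b"
    by (rule grid_edgesE)
  then have "e = mirror ` {mirror a, mirror b}" "{mirror a, mirror b} \<in> grid_edges V"
    by (simp_all add: doubleton_in_grid_edges)
  then show "e \<in> mirror_edges (grid_edges V)"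
    by blast
next
  fix e assume "e \<in> mirror_edges (grid_edges V)"
  then obtain a b where "e = {mirror a, mirror b}" "a \<in> V" "b \<in> V" "adj a b"
    by (auto elim!: grid_edgesE)
  then show "e \<in> grid_edges (mirror ` V)"
    by (simp add: doubleton_in_grid_edges)
qed

lemma graph_connected_mirror: "graph_connected V E \<Longrightarrow> graph_connected (mirror ` V) (mirror_edges E)"
  by (erule graph_connected_image) simp

definition mirror_shape :: "shape \<Rightarrow> shape" where
  "mirror_shape S = (mirror ` fst S, mirror_edges (snd S))"

abbreviation mirror_node :: "pt + pt \<Rightarrow> pt + pt" where
  "mirror_node \<equiv> map_sum mirror mirror"

lemma mirror_node_mirror_node [simp]: "mirror_node (mirror_node x) = x"
  by (cases x) simp_all

lemma start_pos_mirror_node [simp]: "start_pos (mirror_node x) = mirror (start_pos x)"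
  by (cases x) (simp_all add: start_pos_def)

lemma step_nodes_mirror: "step_nodes (mirror ` V) (mirror ` Ops) = mirror_node ` step_nodes V Ops"
  by (simp add: step_nodes_def image_Un image_image)

abbreviation mirror_step_edge :: "(pt + pt) \<times> (pt + pt) \<times> pt \<Rightarrow> (pt + pt) \<times> (pt + pt) \<times> pt" where
  "mirror_step_edge \<equiv> map_prod mirror_node (map_prod mirror_node mirror)"

lemma mirror_step_edge_mirror_step_edge [simp]: "mirror_step_edge (mirror_step_edge e) = e"
  by (cases e) auto

lemma step_edges_mirror_subset:
  "mirror_step_edge ` step_edges E d Ops H
     \<subseteq> step_edges (mirror_edges E) (mirror d) (mirror ` Ops) (\<lambda>u. mirror ` H (mirror u))"
  (is "_ \<subseteq> ?M")
proof (rule image_subsetI)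
  fix e assume "e \<in> step_edges E d Ops H"
  then consider (kept) a b where "e = (Inl a, Inl b, psub b a)" "{a, b} \<in> E"
      "\<not> (a \<in> Ops \<and> b = padd a d)" "\<not> (b \<in> Ops \<and> a = padd b d)"
      "\<not> (a \<in> Ops \<and> b \<in> H a)" "\<not> (b \<in> Ops \<and> a \<in> H b)"
    | (grown) u where "e = (Inl u, Inr u, d)" "u \<in> Ops"
    | (split) u where "e = (Inr u, Inl (padd u d), d)" "u \<in> Ops" "{u, padd u d} \<in> E"
    | (handed) u w where "e = (Inr u, Inl w, psub w u)" "u \<in> Ops" "w \<in> H u"
    unfolding step_edges_def by blast
  then show "mirror_step_edge e \<in> ?M"
  proof cases
    case kept
    then show ?thesis
      unfolding step_edges_def by (intro UnI1 CollectI exI[of _ "mirror a"] exI[of _ "mirror b"]) simp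
  next
    case grown
    then show ?thesis
      unfolding step_edges_def by (intro UnI1[OF UnI1[OF UnI2]] CollectI exI[of _ "mirror u"]) simp
  next
    case split
    then show ?thesis
      unfolding step_edges_def by (intro UnI1[OF UnI2] CollectI exI[of _ "mirror u"]) simp
  next
    case handed
    then show ?thesis
      unfolding step_edges_def by (intro UnI2 CollectI exI[of _ "mirror u"] exI[of _ "mirror w"]) simp
  qed
qed

lemma step_edges_mirror:
  "step_edges (mirror_edges E) (mirror d) (mirror ` Ops) (\<lambda>u. mirror ` H (mirror u))
     = mirror_step_edge ` step_edges E d Ops H" (is "?L = ?R")
proof
  show "?R \<subseteq> ?L"
    by (rule step_edges_mirror_subset)
  have "mirror_step_edge ` ?L \<subseteq> step_edges E d Ops H"
    using step_edges_mirror_subset[of "mirror_edges E" "mirror d" "mirror ` Ops" "\<lambda>u. mirror ` H (mirror u)"]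
    by (simp add: image_image)
  then have "mirror_step_edge ` mirror_step_edge ` ?L \<subseteq> ?R"
    by (rule image_mono)
  then show "?L \<subseteq> ?R"
    by (simp add: image_image map_prod.comp comp_def)
qed

lemma traj_mirror:
  "traj (mirror \<circ> p \<circ> mirror_node) (mirror_node x) s = prod.swap (traj p x s)"
  by (simp add: traj_def mirror_def)

lemma valid_ops_mirror:
  assumes "valid_ops V E d Ops H"
  shows "valid_ops (mirror ` V) (mirror_edges E) (mirror d) (mirror ` Ops) (\<lambda>u. mirror ` H (mirror u))"
  unfolding valid_ops_def
proof (intro conjI ballI)
  show "mirror d \<in> unit_dirs" "mirror ` Ops \<subseteq> mirror ` V"
    using assms unfolding valid_ops_def by auto
  fix u assume "u \<in> mirror ` Ops"
  show "mirror ` H (mirror u) \<subseteq> {w. {u, w} \<in> mirror_edges E \<and> perp (psub w u) (mirror d)}"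
  proof
    fix w assume "w \<in> mirror ` H (mirror u)"
    with \<open>u \<in> mirror ` Ops\<close> obtain u0 w0 where "u = mirror u0" "w = mirror w0" "u0 \<in> Ops" "w0 \<in> H u0"
      by (metis image_iff mirror_mirror)
    then show "w \<in> {w. {u, w} \<in> mirror_edges E \<and> perp (psub w u) (mirror d)}"
      using assms unfolding valid_ops_def by auto
  qed
qed

lemma collision_free_mirror:
  assumes "collision_free V E d Ops H p"
  shows "collision_free (mirror ` V) (mirror_edges E) (mirror d) (mirror ` Ops)
    (\<lambda>u. mirror ` H (mirror u)) (mirror \<circ> p \<circ> mirror_node)"
  unfolding collision_free_def step_edges_mirror step_nodes_mirror
proof (intro conjI ballI allI impI)
  fix e assume "e \<in> mirror_step_edge ` step_edges E d Ops H"
  then obtain x y off where "(x, y, off) \<in> step_edges E d Ops H" "e = mirror_step_edge (x, y, off)"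
    by auto
  then show "case e of (x, y, off) \<Rightarrow> psub ((mirror \<circ> p \<circ> mirror_node) y) ((mirror \<circ> p \<circ> mirror_node) x) = off"
    using assms unfolding collision_free_def by auto
next
  fix x y and s :: real
  assume "x \<in> mirror_node ` step_nodes V Ops" "y \<in> mirror_node ` step_nodes V Ops"
    and "x \<noteq> y" and "0 < s \<and> s \<le> 1"
  then obtain x0 y0 where "x0 \<in> step_nodes V Ops" "y0 \<in> step_nodes V Ops"
    "x = mirror_node x0" "y = mirror_node y0" "x0 \<noteq> y0" "0 < s" "s \<le> 1"
    by auto
  then have "traj p x0 s \<noteq> traj p y0 s"
    using assms unfolding collision_free_def by blast
  then show "traj (mirror \<circ> p \<circ> mirror_node) x s \<noteq> traj (mirror \<circ> p \<circ> mirror_node) y s"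
    unfolding \<open>x = mirror_node x0\<close> \<open>y = mirror_node y0\<close> traj_mirror
    by (metis swap_swap)
qed

lemma growth_step_mirror:
  assumes "growth_step S S'"
  shows "growth_step (mirror_shape S) (mirror_shape S')"
proof -
  obtain d Ops H p where ops: "valid_ops (fst S) (snd S) d Ops H"
    and cf: "collision_free (fst S) (snd S) d Ops H p"
    and S': "S' = (p ` step_nodes (fst S) Ops,
                   {{p x, p y} | x y off. (x, y, off) \<in> step_edges (snd S) d Ops H})"
    using assms unfolding growth_step_def by blast
  let ?H = "\<lambda>u. mirror ` H (mirror u)" and ?p = "mirror \<circ> p \<circ> mirror_node"
  have image_form: "{{f x, f y} | x y off. (x, y, off) \<in> A} = (\<lambda>(x, y, off). {f x, f y}) ` A"
    for f :: "pt + pt \<Rightarrow> pt" and A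
    by force
  have "?p ` step_nodes (mirror ` fst S) (mirror ` Ops) = mirror ` fst S'"
    unfolding step_nodes_mirror S' by (simp add: image_image)
  moreover have "{{?p x, ?p y} | x y off.
      (x, y, off) \<in> step_edges (mirror_edges (snd S)) (mirror d) (mirror ` Ops) ?H} = mirror_edges (snd S')"
    unfolding step_edges_mirror S' image_form by (simp add: image_image case_prod_beta)
  ultimately show ?thesis
    using valid_ops_mirror[OF ops] collision_free_mirror[OF cf]
    unfolding growth_step_def mirror_shape_def fst_conv snd_conv
    by (intro exI[of _ "mirror d"] exI[of _ "mirror ` Ops"] exI[of _ ?H] exI[of _ ?p]) simp
qed

lemma cb_step_mirror:
  assumes "cb_step B Y"
  shows "cb_step (mirror_shape B) (mirror_shape Y)"
proof -
  obtain E where "E \<subseteq> snd B" "graph_connected (fst B) E" "growth_step (fst B, E) Y"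
    using assms unfolding cb_step_def by blast
  then show ?thesis
    unfolding cb_step_def
    by (intro exI[of _ "mirror_edges E"])
      (auto simp: graph_connected_mirror dest: growth_step_mirror simp add: mirror_shape_def)
qed

lemma AC_mirror: "AC (mirror_shape S) = mirror_shape (AC S)"
  by (simp add: AC_def mirror_shape_def grid_edges_mirror image_Un)

lemma mirror_shape_single_node: "mirror_shape single_node = single_node"
  by (simp add: mirror_shape_def single_node_def mirror_def)

lemma process_prefix_mirror:
  assumes "process_prefix k B"
  shows "process_prefix k (mirror_shape B)"
proof -
  obtain Sb Se where "Sb 1 = single_node" "Sb (Suc k) = B"
    "\<forall>t\<in>{1..k}. cb_step (Sb t) (Se t) \<and> Sb (Suc t) = AC (Se t)"
    using assms unfolding process_prefix_def by blast
  then show ?thesis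
    unfolding process_prefix_def
    by (intro exI[of _ "mirror_shape \<circ> Sb"] exI[of _ "mirror_shape \<circ> Se"])
      (simp add: mirror_shape_single_node cb_step_mirror AC_mirror)
qed

lemma reaches_mirror:
  assumes "reaches k V"
  shows "reaches k (mirror ` V)"
proof -
  obtain E where "grid_edges V \<subseteq> E" "process_prefix k (V, E)"
    using assms unfolding reaches_def by blast
  then show ?thesis
    using process_prefix_mirror[of k "(V, E)"]
    unfolding reaches_def mirror_shape_def grid_edges_mirror by auto
qed

lemma grid_connected_mirror: "grid_connected V \<Longrightarrow> grid_connected (mirror ` V)"
  unfolding grid_edges_mirror by (rule graph_connected_mirror)

section \<open>Undoing the halving of x-coordinates\<close>

definition halve :: "pt \<Rightarrow> pt" where
  "halve p = (fst p div 2, snd p)"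

definition even_pt :: "pt \<Rightarrow> pt" where
  "even_pt t = (2 * fst t, snd t)"

definition odd_pt :: "pt \<Rightarrow> pt" where
  "odd_pt t = (2 * fst t + 1, snd t)"

lemma halve_even_pt [simp]: "halve (even_pt t) = t" and halve_odd_pt [simp]: "halve (odd_pt t) = t"
  by (simp_all add: halve_def even_pt_def odd_pt_def)

lemma even_or_odd_pt: "p = even_pt (halve p) \<or> p = odd_pt (halve p)"
  by (cases p) (auto simp: halve_def even_pt_def odd_pt_def)

lemma in_halve_image_iff: "t \<in> halve ` V \<longleftrightarrow> even_pt t \<in> V \<or> odd_pt t \<in> V"
  by (metis even_or_odd_pt halve_even_pt halve_odd_pt image_eqI imageE)

lemma halve_adj: "adj a b \<Longrightarrow> halve a = halve b \<or> adj (halve a) (halve b)"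
  by (cases a, cases b) (auto simp: adj_def halve_def)

text \<open>The step that undoes \<open>halve\<close>: a node \<open>t\<close> of \<open>halve ` V\<close> stands for the points
  \<open>even_pt t\<close>, \<open>odd_pt t\<close> of \<open>V\<close>. If both are present, \<open>t\<close> grows to the right; the vertical
  neighbours of \<open>t\<close> that stand for an odd point only are handed over to the new node.\<close>

definition halving_edges :: "pt set \<Rightarrow> pt set set" where
  "halving_edges V = {{halve a, halve b} | a b. a \<in> V \<and> b \<in> V \<and> adj a b \<and> halve a \<noteq> halve b}"

definition halving_ops :: "pt set \<Rightarrow> pt set" where
  "halving_ops V = {t. even_pt t \<in> V \<and> odd_pt t \<in> V}"

definition halving_handover :: "pt set \<Rightarrow> pt \<Rightarrow> pt set" where
  "halving_handover V t =
     {w. {t, w} \<in> halving_edges V \<and> fst w = fst t \<and> even_pt w \<notin> V \<and> odd_pt w \<in> V}"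

definition halving_pos :: "pt set \<Rightarrow> pt + pt \<Rightarrow> pt" where
  "halving_pos V = case_sum (\<lambda>t. if even_pt t \<in> V then even_pt t else odd_pt t) odd_pt"

lemma doubleton_in_halving_edges:
  "{t, w} \<in> halving_edges V \<longleftrightarrow>
     (\<exists>a b. a \<in> V \<and> b \<in> V \<and> adj a b \<and> halve a = t \<and> halve b = w \<and> t \<noteq> w)"
  unfolding halving_edges_def by (auto simp: doubleton_eq_iff) (metis adj_commute)+

lemma halving_edgeE:
  assumes "{t, w} \<in> halving_edges V"
  obtains (right) "w = padd t (1, 0)" "odd_pt t \<in> V" "even_pt w \<in> V"
    | (left) "t = padd w (1, 0)" "odd_pt w \<in> V" "even_pt t \<in> V"
    | (vertical) "fst w = fst t" "adj t w" "even_pt t \<in> V \<and> even_pt w \<in> V \<or> odd_pt t \<in> V \<and> odd_pt w \<in> V"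
proof -
  obtain a b where ab: "a \<in> V" "b \<in> V" "adj a b" "halve a = t" "halve b = w" "t \<noteq> w"
    using assms unfolding doubleton_in_halving_edges by blast
  obtain ax ay bx "by" where a: "a = (ax, ay)" and b: "b = (bx, by)"
    by fastforce
  have t: "t = (ax div 2, ay)" and w: "w = (bx div 2, by)"
    using ab a b unfolding halve_def by auto
  with ab(6) have ne: "ax div 2 \<noteq> bx div 2 \<or> ay \<noteq> by"
    by auto
  have "\<bar>ax - bx\<bar> + \<bar>ay - by\<bar> = 1"
    using ab(3) unfolding a b adj_def by simp
  then consider "ay = by" "bx = ax + 1" | "ay = by" "ax = bx + 1" | "ax = bx" "\<bar>ay - by\<bar> = 1"
    by arith
  then show thesis
  proof cases
    case 1
    with ne have "ax = 2 * (ax div 2) + 1" "bx = 2 * (bx div 2)" "bx div 2 = ax div 2 + 1"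
      by presburger+
    with 1 show thesis
      using right ab a b t w by (simp add: even_pt_def odd_pt_def padd_def)
  next
    case 2
    with ne have "bx = 2 * (bx div 2) + 1" "ax = 2 * (ax div 2)" "ax div 2 = bx div 2 + 1"
      by presburger+
    with 2 show thesis
      using left ab a b t w by (simp add: even_pt_def odd_pt_def padd_def)
  next
    case 3
    have "ax = 2 * (ax div 2) \<or> ax = 2 * (ax div 2) + 1"
      by presburger
    with 3 show thesis
      using vertical ab a b t w by (auto simp: even_pt_def odd_pt_def adj_def)
  qed
qed

lemma halving_edges_subset_grid_edges: "halving_edges V \<subseteq> grid_edges (halve ` V)"
  by (auto simp: halving_edges_def doubleton_in_grid_edges dest: halve_adj)

lemma graph_connected_halving_edges:
  assumes "grid_connected V"
  shows "graph_connected (halve ` V) (halving_edges V)"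
  using assms by (rule graph_connected_image) (auto simp: doubleton_in_grid_edges halving_edges_def)

lemma grid_connected_halve: "grid_connected V \<Longrightarrow> grid_connected (halve ` V)"
  using graph_connected_halving_edges graph_connected_mono halving_edges_subset_grid_edges by blast

lemma valid_ops_halving:
  "valid_ops (halve ` V) (halving_edges V) (1, 0) (halving_ops V) (halving_handover V)"
  by (auto simp: valid_ops_def unit_dirs_def halving_ops_def halving_handover_def
      in_halve_image_iff perp_def psub_def)

lemma halving_pos_respects_kept_edge:
  assumes "{a, b} \<in> halving_edges V"
    and not_split: "\<not> (a \<in> halving_ops V \<and> b = padd a (1, 0))" "\<not> (b \<in> halving_ops V \<and> a = padd b (1, 0))"
    and not_handed: "\<not> (a \<in> halving_ops V \<and> b \<in> halving_handover V a)"
      "\<not> (b \<in> halving_ops V \<and> a \<in> halving_handover V b)"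
  shows "psub (halving_pos V (Inl b)) (halving_pos V (Inl a)) = psub b a"
  using assms(1)
proof (cases rule: halving_edgeE)
  case right
  with not_split have "even_pt a \<notin> V"
    by (simp add: halving_ops_def)
  with right show ?thesis
    by (simp add: halving_pos_def even_pt_def odd_pt_def psub_def padd_def)
next
  case left
  with not_split have "even_pt b \<notin> V"
    by (simp add: halving_ops_def)
  with left show ?thesis
    by (simp add: halving_pos_def even_pt_def odd_pt_def psub_def padd_def)
next
  case vertical
  have "{b, a} \<in> halving_edges V"
    using assms(1) by (simp add: insert_commute)
  \<comment> \<open>had only \<open>a\<close> its even point, \<open>a\<close> would split and \<open>b\<close> would be handed over\<close>
  then have "even_pt a \<in> V \<longleftrightarrow> even_pt b \<in> V"
    using assms(1) vertical not_handed by (auto simp: halving_ops_def halving_handover_def)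
  with vertical show ?thesis
    by (simp add: halving_pos_def even_pt_def odd_pt_def psub_def)
qed

lemma halving_pos_respects_step_edges:
  assumes "(x, y, off) \<in> step_edges (halving_edges V) (1, 0) (halving_ops V) (halving_handover V)"
  shows "psub (halving_pos V y) (halving_pos V x) = off"
  using assms unfolding step_edges_def
proof (elim UnE CollectE exE conjE)
  fix a b
  assume "(x, y, off) = (Inl a, Inl b, psub b a)" "{a, b} \<in> halving_edges V"
    "\<not> (a \<in> halving_ops V \<and> b = padd a (1, 0))" "\<not> (b \<in> halving_ops V \<and> a = padd b (1, 0))"
    "\<not> (a \<in> halving_ops V \<and> b \<in> halving_handover V a)"
    "\<not> (b \<in> halving_ops V \<and> a \<in> halving_handover V b)"
  then show ?thesis
    using halving_pos_respects_kept_edge[of a b V] by simp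
next
  fix u
  assume "(x, y, off) = (Inl u, Inr u, (1, 0))" "u \<in> halving_ops V"
  then show ?thesis
    by (simp add: halving_pos_def halving_ops_def even_pt_def odd_pt_def psub_def)
next
  fix u
  assume xy: "(x, y, off) = (Inr u, Inl (padd u (1, 0)), (1, 0))"
    and edge: "{u, padd u (1, 0)} \<in> halving_edges V"
  have "even_pt (padd u (1, 0)) \<in> V"
    using edge by (cases rule: halving_edgeE) (auto simp: padd_def prod_eq_iff)
  with xy show ?thesis
    by (simp add: halving_pos_def even_pt_def odd_pt_def psub_def padd_def)
next
  fix u w
  assume "(x, y, off) = (Inr u, Inl w, psub w u)" "w \<in> halving_handover V u"
  then show ?thesis
    by (simp add: halving_pos_def halving_handover_def odd_pt_def psub_def)
qed

lemma fst_traj_less: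
  assumes "fst (start_pos x) \<le> fst (start_pos y)" "fst (p x) < fst (p y)" "0 < s" "s \<le> 1"
  shows "fst (traj p x s) < fst (traj p y s)"
proof -
  let ?sx = "real_of_int (fst (start_pos x))" and ?sy = "real_of_int (fst (start_pos y))"
  let ?px = "real_of_int (fst (p x))" and ?py = "real_of_int (fst (p y))"
  have "(1 - s) * ?sx \<le> (1 - s) * ?sy"
    using assms by (intro mult_left_mono) auto
  moreover have "s * ?px < s * ?py"
    using assms by simp
  ultimately show ?thesis
    by (simp add: traj_def algebra_simps)
qed

lemma halving_pos_in_row:
  "snd (halving_pos V x) = snd (start_pos x)"
  "2 * fst (start_pos x) \<le> fst (halving_pos V x)" "fst (halving_pos V x) \<le> 2 * fst (start_pos x) + 1"
  by (cases x; simp add: halving_pos_def start_pos_def even_pt_def odd_pt_def)+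

lemma halving_pos_split_apart:
  assumes "x \<in> step_nodes (halve ` V) (halving_ops V)" "y \<in> step_nodes (halve ` V) (halving_ops V)"
    and "x \<noteq> y" and "start_pos x = start_pos y"
  shows "fst (halving_pos V x) \<noteq> fst (halving_pos V y)"
proof -
  define u where "u = start_pos x"
  have "x \<in> {Inl u, Inr u}" "y \<in> {Inl u, Inr u}"
    using assms(4) unfolding u_def by (cases x; cases y; simp add: start_pos_def)+
  with assms(3) have xy: "x = Inl u \<and> y = Inr u \<or> x = Inr u \<and> y = Inl u"
    by blast
  with assms(1,2) have "u \<in> halving_ops V"
    unfolding step_nodes_def by blast
  then have "fst (halving_pos V (Inl u)) \<noteq> fst (halving_pos V (Inr u))"
    by (simp add: halving_pos_def halving_ops_def even_pt_def odd_pt_def)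
  with xy show ?thesis
    by auto
qed

lemma halving_pos_keeps_row_order:
  assumes "x \<in> step_nodes (halve ` V) (halving_ops V)" "y \<in> step_nodes (halve ` V) (halving_ops V)"
    and "x \<noteq> y" and "snd (start_pos x) = snd (start_pos y)"
  shows "fst (start_pos x) \<le> fst (start_pos y) \<and> fst (halving_pos V x) < fst (halving_pos V y) \<or>
         fst (start_pos y) \<le> fst (start_pos x) \<and> fst (halving_pos V y) < fst (halving_pos V x)"
proof (cases "fst (start_pos x) = fst (start_pos y)")
  case True
  with assms(4) have "start_pos x = start_pos y"
    by (simp add: prod_eq_iff)
  with True show ?thesis
    using halving_pos_split_apart[OF assms(1-3)] by auto
next
  case False
  then show ?thesis
    using halving_pos_in_row(2,3)[where V = V and x = x] halving_pos_in_row(2,3)[where V = V and x = y]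
    by auto
qed

lemma halving_collision_free:
  assumes "x \<in> step_nodes (halve ` V) (halving_ops V)" "y \<in> step_nodes (halve ` V) (halving_ops V)"
    and "x \<noteq> y" and "0 < s" "s \<le> 1"
  shows "traj (halving_pos V) x s \<noteq> traj (halving_pos V) y s"
proof (cases "snd (start_pos x) = snd (start_pos y)")
  case False
  then show ?thesis
    by (simp add: traj_def halving_pos_in_row(1) prod_eq_iff)
next
  case True
  then have "fst (traj (halving_pos V) x s) < fst (traj (halving_pos V) y s) \<or>
      fst (traj (halving_pos V) y s) < fst (traj (halving_pos V) x s)"
    using halving_pos_keeps_row_order[OF assms(1-3)] assms(4,5) fst_traj_less by metis
  then show ?thesis
    by auto
qed

lemma halving_pos_image: "halving_pos V ` step_nodes (halve ` V) (halving_ops V) = V"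
proof (intro equalityI subsetI)
  fix q assume "q \<in> halving_pos V ` step_nodes (halve ` V) (halving_ops V)"
  then consider t where "t \<in> halve ` V" "q = halving_pos V (Inl t)"
    | t where "t \<in> halving_ops V" "q = halving_pos V (Inr t)"
    unfolding step_nodes_def by blast
  then show "q \<in> V"
    by cases (auto simp: halving_pos_def halving_ops_def in_halve_image_iff)
next
  fix a assume "a \<in> V"
  let ?t = "halve a"
  have "a = halving_pos V (Inl ?t) \<or> ?t \<in> halving_ops V \<and> a = halving_pos V (Inr ?t)"
    using even_or_odd_pt[of a] \<open>a \<in> V\<close> by (auto simp: halving_pos_def halving_ops_def)
  then show "a \<in> halving_pos V ` step_nodes (halve ` V) (halving_ops V)"
    using \<open>a \<in> V\<close> unfolding step_nodes_def by blast
qed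

lemma cb_step_halving:
  assumes "grid_connected V" and "grid_edges (halve ` V) \<subseteq> E"
  shows "\<exists>Y. cb_step (halve ` V, E) Y \<and> fst Y = V"
proof -
  let ?E = "halving_edges V"
  have "collision_free (halve ` V) ?E (1, 0) (halving_ops V) (halving_handover V) (halving_pos V)"
    unfolding collision_free_def
    using halving_pos_respects_step_edges halving_collision_free by fast
  then have "growth_step (halve ` V, ?E) (V, {{halving_pos V x, halving_pos V y} | x y off.
      (x, y, off) \<in> step_edges ?E (1, 0) (halving_ops V) (halving_handover V)})"
    unfolding growth_step_def fst_conv snd_conv using valid_ops_halving halving_pos_image
    by (intro exI[of _ "(1, 0)"] exI[of _ "halving_ops V"] exI[of _ "halving_handover V"]
        exI[of _ "halving_pos V"]) simp
  moreover have "?E \<subseteq> E"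
    using halving_edges_subset_grid_edges assms(2) by blast
  ultimately show ?thesis
    using graph_connected_halving_edges[OF assms(1)] unfolding cb_step_def fst_conv snd_conv
    by (intro exI conjI) auto
qed

lemma reaches_Suc_halve: "reaches k (halve ` V) \<Longrightarrow> grid_connected V \<Longrightarrow> reaches (Suc k) V"
  by (erule reaches_Suc) (rule cb_step_halving)

section \<open>Shapes in boxes\<close>

definition box :: "nat \<Rightarrow> nat \<Rightarrow> pt set" where
  "box m n = {0..<2 ^ m} \<times> {0..<2 ^ n}"

lemma box_0_0: "box 0 0 = {(0, 0)}"
  by (auto simp: box_def)

lemma halve_image_subset_box:
  assumes "V \<subseteq> box (Suc m) n"
  shows "halve ` V \<subseteq> box m n"
proof -
  have "a div 2 < K" if "a < 2 * K" for a K :: int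
    using that by presburger
  then show ?thesis
    using assms by (auto simp: box_def halve_def subset_iff)
qed

lemma mirror_image_subset_box: "V \<subseteq> box m n \<Longrightarrow> mirror ` V \<subseteq> box n m"
  by (auto simp: box_def mirror_def subset_iff)

lemma reaches_box:
  assumes "V \<subseteq> box m n" and "V \<noteq> {}" and "grid_connected V"
  shows "reaches (m + n) V"
  using assms
proof (induction "m + n" arbitrary: m n V)
  case 0
  then have "V = {(0, 0)}"
    by (auto simp: box_0_0)
  with "0.hyps" show ?case
    using reaches_0 by simp
next
  case (Suc k)
  have by_halving: "reaches (Suc m' + n') W"
    if "W \<subseteq> box (Suc m') n'" "W \<noteq> {}" "grid_connected W" "m' + n' = k" for m' n' W
  proof -
    have "reaches (m' + n') (halve ` W)"
      using that by (intro Suc.hyps(1) halve_image_subset_box grid_connected_halve) auto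
    then show ?thesis
      using that(3) by (simp add: reaches_Suc_halve)
  qed
  show ?case
  proof (cases m)
    case (Suc m')
    then show ?thesis
      using Suc.hyps(2) Suc.prems by_halving[of V m' n] by simp
  next
    case 0
    with Suc.hyps(2) obtain n' where n: "n = Suc n'"
      by (cases n) auto
    have "reaches (Suc n' + 0) (mirror ` V)"
      using Suc.hyps(2) Suc.prems unfolding 0 n
      by (intro by_halving) (auto simp: mirror_image_subset_box grid_connected_mirror)
    then show ?thesis
      using reaches_mirror[of "Suc n'" "mirror ` V"] unfolding 0 n by simp
  qed
qed

lemma coordinate_image_interval:
  fixes g :: "pt \<Rightarrow> int"
  assumes "grid_connected V" and "a \<in> V" and "b \<in> V" and "g a \<le> v" and "v \<le> g b"
    and lipschitz: "\<And>p q. adj p q \<Longrightarrow> \<bar>g p - g q\<bar> \<le> 1"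
  shows "v \<in> g ` V"
proof -
  have "(a, b) \<in> {(p, q). {p, q} \<in> grid_edges V}\<^sup>*"
    using assms(1-3) unfolding graph_connected_def by blast
  then show ?thesis
    using assms(4,5)
  proof (induction arbitrary: v rule: rtrancl_induct)
    case base
    then have "v = g a"
      by simp
    with assms(2) show ?case
      by blast
  next
    case (step q r)
    from step.hyps(2) have "r \<in> V" "adj q r"
      by (simp_all add: doubleton_in_grid_edges)
    then have "\<bar>g q - g r\<bar> \<le> 1"
      by (intro lipschitz) simp
    show ?case
    proof (cases "v \<le> g q")
      case True
      with step.prems(1) show ?thesis
        by (rule step.IH)
    next
      case False
      with step.prems \<open>\<bar>g q - g r\<bar> \<le> 1\<close> have "v = g r"
        by linarith
      with \<open>r \<in> V\<close> show ?thesis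
        by blast
    qed
  qed
qed

lemma coordinate_range:
  fixes g :: "pt \<Rightarrow> int"
  assumes "grid_connected V" and "finite V" and "V \<noteq> {}"
    and lipschitz: "\<And>p q. adj p q \<Longrightarrow> \<bar>g p - g q\<bar> \<le> 1"
  shows "\<forall>q\<in>V. 0 \<le> g q - Min (g ` V) \<and> g q - Min (g ` V) < int (card (g ` V))"
proof
  let ?lo = "Min (g ` V)" and ?hi = "Max (g ` V)"
  have fin: "finite (g ` V)" "g ` V \<noteq> {}"
    using assms(2,3) by auto
  obtain a where a: "a \<in> V" "g a = ?lo"
    using Min_in[OF fin] by auto
  obtain b where b: "b \<in> V" "g b = ?hi"
    using Max_in[OF fin] by auto
  have "{?lo..?hi} \<subseteq> g ` V"
  proof
    fix v assume "v \<in> {?lo..?hi}"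
    then show "v \<in> g ` V"
      using coordinate_image_interval[OF assms(1) a(1) b(1) _ _ lipschitz] a(2) b(2) by simp
  qed
  then have "card {?lo..?hi} \<le> card (g ` V)"
    by (rule card_mono[OF fin(1)])
  then have card: "?hi - ?lo + 1 \<le> int (card (g ` V))"
    by simp
  fix q assume "q \<in> V"
  then have "?lo \<le> g q" "g q \<le> ?hi"
    using fin(1) by simp_all
  with card show "0 \<le> g q - ?lo \<and> g q - ?lo < int (card (g ` V))"
    by linarith
qed

lemma grid_connected_if_is_shape: "is_shape S \<Longrightarrow> grid_connected (fst S)"
  unfolding is_shape_def using graph_connected_mono by blast

lemma fits_in_box_after_translation:
  assumes "is_shape S" and "num_cols S \<le> 2 ^ m" and "num_rows S \<le> 2 ^ n"
  shows "\<exists>c. fst (translate c S) \<subseteq> box m n"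
proof -
  let ?V = "fst S"
  let ?c = "(- Min (fst ` ?V), - Min (snd ` ?V))"
  have V: "grid_connected ?V" "finite ?V" "?V \<noteq> {}"
    using assms(1) grid_connected_if_is_shape unfolding is_shape_def by blast+
  have lipschitz: "\<bar>fst p - fst q\<bar> \<le> 1" "\<bar>snd p - snd q\<bar> \<le> 1" if "adj p q" for p q
    using that unfolding adj_def by linarith+
  have "\<forall>q\<in>?V. 0 \<le> fst q - Min (fst ` ?V) \<and> fst q - Min (fst ` ?V) < int (num_cols S)"
    unfolding num_cols_def using lipschitz(1) by (rule coordinate_range[OF V])
  moreover have "\<forall>q\<in>?V. 0 \<le> snd q - Min (snd ` ?V) \<and> snd q - Min (snd ` ?V) < int (num_rows S)"
    unfolding num_rows_def using lipschitz(2) by (rule coordinate_range[OF V])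
  moreover have "int (num_cols S) \<le> 2 ^ m" "int (num_rows S) \<le> 2 ^ n"
    using assms(2,3) by (metis of_nat_le_iff of_nat_numeral of_nat_power)+
  ultimately have "padd ?c q \<in> box m n" if "q \<in> ?V" for q
    using that unfolding box_def padd_def mem_Times_iff fst_conv snd_conv atLeastLessThan_iff
    by (smt (verit))
  then have "fst (translate ?c S) \<subseteq> box m n"
    unfolding translate_def by auto
  then show ?thesis ..
qed

lemma adj_padd [simp]: "adj (padd c p) (padd c q) \<longleftrightarrow> adj p q"
  by (simp add: adj_def padd_def)

lemma is_shape_translate:
  assumes "is_shape S"
  shows "is_shape (translate c S)"
proof -
  let ?f = "\<lambda>e. padd c ` e"
  have "graph_connected (padd c ` fst S) (?f ` snd S)"
  proof (rule graph_connected_image)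
    show "graph_connected (fst S) (snd S)"
      using assms unfolding is_shape_def by blast
    fix a b assume "{a, b} \<in> snd S"
    then have "?f {a, b} \<in> ?f ` snd S"
      by (rule imageI)
    then show "padd c a = padd c b \<or> {padd c a, padd c b} \<in> ?f ` snd S"
      by simp
  qed
  moreover have "?f ` snd S \<subseteq> grid_edges (padd c ` fst S)"
  proof
    fix e assume "e \<in> ?f ` snd S"
    then obtain e0 where "e0 \<in> snd S" "e = ?f e0"
      by blast
    moreover from this have "e0 \<in> grid_edges (fst S)"
      using assms unfolding is_shape_def by blast
    ultimately obtain a b where "e = {padd c a, padd c b}" "a \<in> fst S" "b \<in> fst S" "adj a b"
      by (auto elim: grid_edgesE)
    then show "e \<in> grid_edges (padd c ` fst S)"
      by (simp add: doubleton_in_grid_edges)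
  qed
  ultimately show ?thesis
    using assms unfolding is_shape_def translate_def by simp
qed

lemma same_shape_translate: "same_shape (translate c S) S"
proof -
  have "padd (- fst c, - snd c) \<circ> padd c = id"
    by (auto simp: padd_def)
  then have "translate (- fst c, - snd c) (translate c S) = S"
    by (simp add: translate_def image_comp image_image)
  then show ?thesis
    unfolding same_shape_def by metis
qed

lemma grows_in_if_reaches:
  assumes "reaches k (fst S')" and "is_shape S'" and "same_shape S' S"
  shows "grows_in single_node S (Suc k)"
proof -
  obtain E where E: "grid_edges (fst S') \<subseteq> E" "process_prefix k (fst S', E)"
    using assms(1) unfolding reaches_def by blast
  have "snd S' \<subseteq> grid_edges (fst S')" "graph_connected (fst S') (snd S')"
    using assms(2) unfolding is_shape_def by auto
  with E(1) have "cb_step (fst S', E) S'"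
    unfolding cb_step_def using growth_step_idle[of "snd S'" "fst S'"]
    by (intro exI[of _ "snd S'"]) auto
  then show ?thesis
    by (rule grows_in_if_process_prefix[OF E(2) _ assms(3)])
qed

lemma exists_pow2_ge:
  assumes "1 \<le> w"
  shows "\<exists>m. w \<le> 2 ^ m \<and> real m \<le> log 2 (real w) + 1"
proof -
  define m where "m = nat \<lceil>log 2 (real w)\<rceil>"
  have log_nonneg: "0 \<le> log 2 (real w)"
    using assms by simp
  have "real w = 2 powr log 2 (real w)"
    using assms by simp
  also have "\<dots> \<le> 2 powr real m"
    unfolding m_def using log_nonneg by (intro powr_mono) linarith+
  also have "\<dots> = 2 ^ m"
    by (simp add: powr_realpow)
  finally have "w \<le> 2 ^ m"
    by (metis of_nat_le_iff of_nat_numeral of_nat_power)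
  moreover have "real m \<le> log 2 (real w) + 1"
    unfolding m_def using log_nonneg by linarith
  ultimately show ?thesis
    by blast
qed

lemma grows_in_if_fits_box:
  assumes "is_shape S" and "num_cols S \<le> 2 ^ m" and "num_rows S \<le> 2 ^ n"
  shows "grows_in single_node S (Suc (m + n))"
proof -
  obtain c where "fst (translate c S) \<subseteq> box m n"
    using fits_in_box_after_translation[OF assms] by blast
  then have "reaches (m + n) (fst (translate c S))"
    using is_shape_translate[OF assms(1)] grid_connected_if_is_shape
    by (intro reaches_box) (auto simp: is_shape_def)
  then show ?thesis
    using is_shape_translate[OF assms(1)] same_shape_translate by (rule grows_in_if_reaches)
qed

theorem theorem4p2:
  "\<exists>C::real. \<forall>S. is_shape S \<longrightarrow>
     (\<exists>tf. grows_in single_node S tf \<and>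
           real tf \<le> C * (1 + log 2 (real (num_rows S)) + log 2 (real (num_cols S))))"
proof (rule exI[of _ 3], intro allI impI)
  fix S assume shape: "is_shape S"
  then have nonempty: "1 \<le> num_cols S" "1 \<le> num_rows S"
    unfolding is_shape_def num_cols_def num_rows_def by (auto simp: Suc_le_eq)
  obtain m where m: "num_cols S \<le> 2 ^ m" "real m \<le> log 2 (real (num_cols S)) + 1"
    using exists_pow2_ge[OF nonempty(1)] by blast
  obtain n where n: "num_rows S \<le> 2 ^ n" "real n \<le> log 2 (real (num_rows S)) + 1"
    using exists_pow2_ge[OF nonempty(2)] by blast
  have "0 \<le> log 2 (real (num_cols S))" "0 \<le> log 2 (real (num_rows S))"
    using nonempty by simp_all
  with m(2) n(2) have "real (Suc (m + n)) \<le> 3 * (1 + log 2 (real (num_rows S)) + log 2 (real (num_cols S)))"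
    by simp
  then show "\<exists>tf. grows_in single_node S tf \<and>
      real tf \<le> 3 * (1 + log 2 (real (num_rows S)) + log 2 (real (num_cols S)))"
    using grows_in_if_fits_box[OF shape m(1) n(1)] by blast
qed

end
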